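(* Let $\Sigma$ be a finite set with $|\Sigma|=k\geq 3$, let $n\geq 1$, let $a,b\in\Sigma$, and let $B=\Sigma\setminus\{a,b\}$. Then every partial $n$-ary quasigroup $g:\Sigma^{n-1}\times B\to\Sigma$ has at most $2^{(k/2)^{n-1}}$ distinct extensions to an $n$-ary quasigroup $f:\Sigma^n\to\Sigma$.
   Context: An $n$-ary quasigroup of order $k=|\Sigma|$ is a function $f:\Sigma^n\to\Sigma$ such that fixing any $n-1$ of its arguments to arbitrary values of $\Sigma$ yields a bijection $\Sigma\to\Sigma$ in the remaining argument. A partial $n$-ary quasigroup is a function $g:\Omega\to\Sigma$ with $\Omega\subset\Sigma^n$ such that $g(\bar x)\neq g(\bar y)$ for any two tuples $\bar x,\bar y\in\Omega$ differing in exactly one position. An $n$-ary quasigroup $f$ is an extension of a partial $n$-ary quasigroup $g:\Omega\to\Sigma$ if $f|_{\Omega}=g$. Here $\Sigma^{n-1}\times B$ denotes the set of tuples in $\Sigma^n$ whose last coordinate lies in $B$. *)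

theory Defs
  imports Complex_Main "HOL-Library.FuncSet"
begin

text \<open>Tuples in Sigma^n: functions on the index set {0..<n} (extensional) with values in S.
  Coordinate n-1 is the last coordinate.\<close>
definition tuples :: "'a set \<Rightarrow> nat \<Rightarrow> (nat \<Rightarrow> 'a) set" where
  "tuples S n = PiE {..<n} (\<lambda>_. S)"

definition nary_quasigroup :: "'a set \<Rightarrow> nat \<Rightarrow> ((nat \<Rightarrow> 'a) \<Rightarrow> 'a) \<Rightarrow> bool" where
  "nary_quasigroup S n f \<longleftrightarrow>
     (\<forall>x\<in>tuples S n. f x \<in> S) \<and>
     (\<forall>i<n. \<forall>x\<in>tuples S n. bij_betw (\<lambda>c. f (x(i := c))) S S)"

definition partial_nary_quasigroup ::
  "'a set \<Rightarrow> nat \<Rightarrow> (nat \<Rightarrow> 'a) set \<Rightarrow> ((nat \<Rightarrow> 'a) \<Rightarrow> 'a) \<Rightarrow> bool" where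
  "partial_nary_quasigroup S n \<Omega> g \<longleftrightarrow>
     \<Omega> \<subseteq> tuples S n \<and> (\<forall>x\<in>\<Omega>. g x \<in> S) \<and>
     (\<forall>x\<in>\<Omega>. \<forall>y\<in>\<Omega>. card {i\<in>{..<n}. x i \<noteq> y i} = 1 \<longrightarrow> g x \<noteq> g y)"

definition extensions ::
  "'a set \<Rightarrow> nat \<Rightarrow> (nat \<Rightarrow> 'a) set \<Rightarrow> ((nat \<Rightarrow> 'a) \<Rightarrow> 'a) \<Rightarrow> ((nat \<Rightarrow> 'a) \<Rightarrow> 'a) set" where
  "extensions S n \<Omega> g =
     {f \<in> extensional (tuples S n). nary_quasigroup S n f \<and> (\<forall>x\<in>\<Omega>. f x = g x)}"

end

theory Submission
  imports Defs "HOL-Library.Disjoint_Sets"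
begin

text \<open>
  Fix one extension \<open>f0\<close>. Any other extension \<open>f\<close> is a bijection in the last coordinate that agrees
  with \<open>f0\<close> outside the layers \<open>a\<close> and \<open>b\<close>, so on each column \<open>x \<in> \<Sigma>\<^sup>n\<^sup>-\<^sup>1\<close> it either copies or swaps
  the two values of \<open>f0\<close> there, and this choice of swaps determines \<open>f\<close>. Call two columns differing in
  one coordinate linked when their value pairs under \<open>f0\<close> meet; since \<open>f\<close> and \<open>f0\<close> are bijective
  along that coordinate, \<open>f\<close> must make the same choice on linked columns. Every column has a linked
  neighbour in each of the \<open>n - 1\<close> directions, so every connected component has at least
  \<open>2\<^sup>n\<^sup>-\<^sup>1\<close> columns. Hence there are at most \<open>(k/2)\<^sup>n\<^sup>-\<^sup>1\<close> components, and at most \<open>2\<close> to that power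
  extensions.
\<close>

lemma bij_betw_value_in_pair_if_eq_outside:
  assumes "bij_betw h S T" "bij_betw h' S T" "\<forall>c\<in>S - {a, b}. h c = h' c" "a \<in> S"
  shows "h a \<in> {h' a, h' b}"
proof -
  have "h a \<in> h' ` S"
    using assms(1,2,4) by (metis bij_betw_imp_surj_on imageI)
  then obtain c where c: "c \<in> S" "h a = h' c" by blast
  have "c \<in> {a, b}"
  proof (rule ccontr)
    assume "c \<notin> {a, b}"
    then have "h c = h a" using assms(3) c by auto
    then show False
      using \<open>c \<notin> {a, b}\<close> c(1) assms(1,4) by (auto simp: bij_betw_def inj_on_def)
  qed
  then show ?thesis using c(2) by auto
qed

lemma bij_betw_eq_if_eq_outside_point:
  assumes "bij_betw h S T" "bij_betw h' S T" "\<forall>c\<in>S - {b}. h c = h' c" "b \<in> S"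
  shows "h b = h' b"
  using bij_betw_value_in_pair_if_eq_outside[of h S T h' b b] assms by simp

lemma two_power_card_le_card_if_coordinate_neighbours:
  fixes T :: "('i \<Rightarrow> 'a) set"
  assumes "finite D" "finite T" "T \<noteq> {}"
    and "\<And>x i. x \<in> T \<Longrightarrow> i \<in> D \<Longrightarrow> \<exists>y\<in>T. y i \<noteq> x i \<and> (\<forall>j. j \<noteq> i \<longrightarrow> y j = x j)"
  shows "2 ^ card D \<le> card T"
  using assms
proof (induction D arbitrary: T rule: finite_induct)
  case empty
  then show ?case by (simp add: Suc_leI card_gt_0_iff)
next
  case (insert i D T)
  obtain x where x: "x \<in> T" using insert.prems(2) by blast
  obtain y where y: "y \<in> T" "y i \<noteq> x i" using insert.prems(3) x by blast
  \<comment> \<open>Split \<open>T\<close> along coordinate \<open>i\<close>: each slice keeps the neighbours in the directions of \<open>D\<close>.\<close>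
  have slice: "2 ^ card D \<le> card {z \<in> T. z i = v}" if "v \<in> {x i, y i}" for v
  proof (rule insert.IH)
    fix z j assume z: "z \<in> {z \<in> T. z i = v}" and j: "j \<in> D"
    obtain w where w: "w \<in> T" "w j \<noteq> z j" "\<forall>l. l \<noteq> j \<longrightarrow> w l = z l"
      using insert.prems(3) z j by blast
    moreover have "w i = z i" using w(3) j insert.hyps(2) by auto
    ultimately show "\<exists>w\<in>{z \<in> T. z i = v}. w j \<noteq> z j \<and> (\<forall>l. l \<noteq> j \<longrightarrow> w l = z l)"
      using z by auto
  qed (use insert.prems(1) x y that in auto)
  have "card {z \<in> T. z i = x i} + card {z \<in> T. z i = y i}
      = card ({z \<in> T. z i = x i} \<union> {z \<in> T. z i = y i})"
    using insert.prems(1) y(2) by (intro card_Un_disjoint[symmetric]) auto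
  also have "\<dots> \<le> card T" using insert.prems(1) by (intro card_mono) auto
  finally show ?case using slice[of "x i"] slice[of "y i"] insert.hyps by simp
qed

lemma equiv_rtrancl_Int:
  assumes "sym R"
  shows "equiv A (R\<^sup>* \<inter> A \<times> A)"
proof (rule equivI)
  show "sym (R\<^sup>* \<inter> A \<times> A)"
    using sym_rtrancl[OF assms] by (auto simp: sym_def)
  show "trans (R\<^sup>* \<inter> A \<times> A)"
    by (auto simp: trans_def intro: rtrancl_trans)
qed (auto simp: refl_on_def)

lemma card_quotient_mult_le_card:
  assumes "finite A" "equiv A r" "\<And>X. X \<in> A // r \<Longrightarrow> m \<le> card X"
  shows "card (A // r) * m \<le> card A"
proof -
  have "card (A // r) * m \<le> (\<Sum>X\<in>A // r. card X)"
    using sum_bounded_below[of "A // r" m card] assms(3) by simp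
  also have "\<dots> = card A"
    using product_partition[OF partition_on_quotient[OF assms(2)]]
      finite_equiv_class[OF assms(1) equiv_type[OF assms(2)]]
    by simp
  finally show ?thesis .
qed

lemma finite_tuples: "finite S \<Longrightarrow> finite (tuples S m)"
  by (simp add: tuples_def finite_PiE)

lemma card_tuples: "card (tuples S m) = card S ^ m"
  by (simp add: tuples_def card_PiE)

lemma tuples_upd:
  "x \<in> tuples S m \<Longrightarrow> i < m \<Longrightarrow> c \<in> S \<Longrightarrow> x(i := c) \<in> tuples S m"
  by (auto simp: tuples_def PiE_def extensional_def)

lemma tuples_in: "x \<in> tuples S m \<Longrightarrow> i < m \<Longrightarrow> x i \<in> S"
  by (auto simp: tuples_def)

lemma tuples_Suc_upd_last:
  "x \<in> tuples S m \<Longrightarrow> c \<in> S \<Longrightarrow> x(m := c) \<in> tuples S (Suc m)"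
  by (auto simp: tuples_def PiE_def extensional_def less_Suc_eq)

lemma tuples_Suc_restrict_last:
  "x \<in> tuples S (Suc m) \<Longrightarrow> x(m := undefined) \<in> tuples S m"
  by (auto simp: tuples_def PiE_def extensional_def)

lemma nary_quasigroup_bij_betw_last:
  assumes "nary_quasigroup S (Suc m) f" "x \<in> tuples S m"
  shows "bij_betw (\<lambda>c. f (x(m := c))) S S"
proof (cases "S = {}")
  case False
  then obtain d where "d \<in> S" by blast
  then have "x(m := d) \<in> tuples S (Suc m)"
    using assms(2) by (simp add: tuples_Suc_upd_last)
  then have "bij_betw (\<lambda>c. f ((x(m := d))(m := c))) S S"
    using assms(1) unfolding nary_quasigroup_def by blast
  then show ?thesis by simp
qed (simp add: bij_betw_def)

lemma nary_quasigroup_bij_betw_line: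
  assumes "nary_quasigroup S (Suc m) f" "x \<in> tuples S m" "i < m" "d \<in> S"
  shows "bij_betw (\<lambda>c. f (x(i := c, m := d))) S S"
proof -
  have "x(m := d) \<in> tuples S (Suc m)" "i < Suc m"
    using assms(2,3,4) by (simp_all add: tuples_Suc_upd_last)
  then have "bij_betw (\<lambda>c. f ((x(m := d))(i := c))) S S"
    using assms(1) unfolding nary_quasigroup_def by blast
  moreover have "(x(m := d))(i := c) = x(i := c, m := d)" for c
    using assms(3) by (simp add: fun_upd_twist)
  ultimately show ?thesis by simp
qed

lemma extensions_eq_extensions_of_mem:
  assumes "f0 \<in> extensions S n \<Omega> g"
  shows "extensions S n \<Omega> g = extensions S n \<Omega> f0"
  using assms by (auto simp: extensions_def)

text \<open>
  A tuple \<open>x \<in> tuples S m\<close> stands for a column, and \<open>x(m := c)\<close> for its point in layer \<open>c\<close>.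
\<close>

locale last_coordinate_pair =
  fixes S :: "'a set" and m :: nat and a b :: 'a and f0 :: "(nat \<Rightarrow> 'a) \<Rightarrow> 'a"
  assumes finite_S: "finite S" and a_in_S: "a \<in> S" and b_in_S: "b \<in> S"
    and quasigroup_f0: "nary_quasigroup S (Suc m) f0"
begin

abbreviation outer :: "(nat \<Rightarrow> 'a) set" where
  "outer \<equiv> {x \<in> tuples S (Suc m). x m \<in> S - {a, b}}"

abbreviation switchings :: "((nat \<Rightarrow> 'a) \<Rightarrow> 'a) set" where
  "switchings \<equiv> extensions S (Suc m) outer f0"

definition column_pair :: "(nat \<Rightarrow> 'a) \<Rightarrow> 'a set" where
  "column_pair x = {f0 (x(m := a)), f0 (x(m := b))}"

lemma switching_eq_outside:
  assumes "f \<in> switchings" "x \<in> tuples S m" "c \<in> S - {a, b}"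
  shows "f (x(m := c)) = f0 (x(m := c))"
proof -
  have "x(m := c) \<in> outer" using assms(2,3) by (simp add: tuples_Suc_upd_last)
  then show ?thesis using assms(1) by (simp add: extensions_def)
qed

lemma switching_value_in_column_pair:
  assumes "f \<in> switchings" "x \<in> tuples S m"
  shows "f (x(m := a)) \<in> column_pair x" "f (x(m := b)) \<in> column_pair x"
proof -
  have bij: "bij_betw (\<lambda>c. f (x(m := c))) S S" "bij_betw (\<lambda>c. f0 (x(m := c))) S S"
    using assms quasigroup_f0 nary_quasigroup_bij_betw_last
    by (auto simp: extensions_def)
  have "\<forall>c\<in>S - {a, b}. f (x(m := c)) = f0 (x(m := c))"
    using switching_eq_outside assms by blast
  then show "f (x(m := a)) \<in> column_pair x" "f (x(m := b)) \<in> column_pair x"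
    using bij_betw_value_in_pair_if_eq_outside[OF bij, of a b]
      bij_betw_value_in_pair_if_eq_outside[OF bij, of b a] a_in_S b_in_S
    by (auto simp: column_pair_def insert_commute)
qed

lemma switching_eqI:
  assumes "f \<in> switchings" "f' \<in> switchings"
    and "\<forall>x\<in>tuples S m. f (x(m := a)) = f' (x(m := a))"
  shows "f = f'"
proof -
  have column: "f (x(m := c)) = f' (x(m := c))" if "x \<in> tuples S m" "c \<in> S" for x c
  proof -
    have bij: "bij_betw (\<lambda>c. f (x(m := c))) S S" "bij_betw (\<lambda>c. f' (x(m := c))) S S"
      using assms(1,2) that(1) nary_quasigroup_bij_betw_last by (auto simp: extensions_def)
    have "f (x(m := e)) = f' (x(m := e))" if "e \<in> S - {b}" for e
      using switching_eq_outside[OF assms(1) \<open>x \<in> tuples S m\<close>, of e]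
        switching_eq_outside[OF assms(2) \<open>x \<in> tuples S m\<close>, of e] assms(3) that
        \<open>x \<in> tuples S m\<close>
      by (cases "e = a") auto
    then show ?thesis
      using bij_betw_eq_if_eq_outside_point[OF bij _ b_in_S] that(2) by (cases "c = b") auto
  qed
  show ?thesis
  proof (rule extensionalityI)
    fix y assume y: "y \<in> tuples S (Suc m)"
    then have "y = (y(m := undefined))(m := y m)" "y m \<in> S"
      by (auto intro: tuples_in)
    then show "f y = f' y"
      using column[OF tuples_Suc_restrict_last[OF y]] by metis
  qed (use assms(1,2) in \<open>auto simp: extensions_def\<close>)
qed

definition linked :: "((nat \<Rightarrow> 'a) \<times> (nat \<Rightarrow> 'a)) set" where
  "linked = {(x, y). x \<in> tuples S m \<and> (\<exists>i<m. \<exists>c\<in>S. y = x(i := c))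
                       \<and> column_pair x \<inter> column_pair y \<noteq> {}}"

definition component :: "((nat \<Rightarrow> 'a) \<times> (nat \<Rightarrow> 'a)) set" where
  "component = linked\<^sup>* \<inter> tuples S m \<times> tuples S m"

lemma sym_linked: "sym linked"
proof (rule symI)
  fix x y assume "(x, y) \<in> linked"
  then obtain i c where "x \<in> tuples S m" "i < m" "c \<in> S" "y = x(i := c)"
    "column_pair x \<inter> column_pair y \<noteq> {}"
    unfolding linked_def by blast
  moreover have "x = y(i := x i)" "x i \<in> S"
    using calculation by (auto intro: tuples_in)
  ultimately show "(y, x) \<in> linked"
    unfolding linked_def by (blast intro: tuples_upd)
qed

lemma equiv_component: "equiv (tuples S m) component"
  unfolding component_def using sym_linked by (rule equiv_rtrancl_Int)

lemma switching_agreement_along_link: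
  assumes "a \<noteq> b" "f \<in> switchings" "(x, y) \<in> linked" "f (x(m := a)) = f0 (x(m := a))"
  shows "f (y(m := a)) = f0 (y(m := a))"
proof -
  obtain i c where x: "x \<in> tuples S m" and i: "i < m" and c: "c \<in> S" and y: "y = x(i := c)"
    and meet: "column_pair x \<inter> column_pair y \<noteq> {}"
    using assms(3) unfolding linked_def by blast
  show ?thesis
  proof (cases "c = x i")
    case False
    have yT: "y \<in> tuples S m" using x i c y by (simp add: tuples_upd)
    have moves: "h (y(m := d)) \<noteq> h (x(m := d))"
      if "nary_quasigroup S (Suc m) h" "d \<in> S" for h d
    proof -
      have "inj_on (\<lambda>e. h (x(i := e, m := d))) S"
        using nary_quasigroup_bij_betw_line[OF that(1) x i that(2)] by (simp add: bij_betw_def)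
      then show ?thesis
        using False c tuples_in[OF x i] y by (auto simp: inj_on_def)
    qed
    have qf: "nary_quasigroup S (Suc m) f" using assms(2) by (simp add: extensions_def)
    have distinct: "h (z(m := a)) \<noteq> h (z(m := b))"
      if "nary_quasigroup S (Suc m) h" "z \<in> tuples S m" for h z
      using nary_quasigroup_bij_betw_last[OF that] assms(1) a_in_S b_in_S
      by (auto simp: bij_betw_def inj_on_def)
    \<comment> \<open>If \<open>f\<close> swapped the pair at \<open>y\<close>, the four \<open>moves\<close> facts would exclude every way the pairs meet.\<close>
    show ?thesis
      using moves[OF qf a_in_S] moves[OF qf b_in_S]
        moves[OF quasigroup_f0 a_in_S] moves[OF quasigroup_f0 b_in_S]
        distinct[OF qf x] distinct[OF qf yT] assms(4) meet
        switching_value_in_column_pair[OF assms(2) x] switching_value_in_column_pair[OF assms(2) yT]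
      unfolding column_pair_def by auto
  qed (use y assms(4) in simp)
qed

lemma switching_agreement_along_component:
  assumes "a \<noteq> b" "f \<in> switchings" "(x, y) \<in> component" "f (x(m := a)) = f0 (x(m := a))"
  shows "f (y(m := a)) = f0 (y(m := a))"
proof -
  have "(x, y) \<in> linked\<^sup>*" using assms(3) by (simp add: component_def)
  then show ?thesis
  proof (induction rule: rtrancl_induct)
    case (step y z)
    then show ?case using switching_agreement_along_link[OF assms(1,2)] by blast
  qed (rule assms(4))
qed

lemma linked_neighbour:
  assumes "a \<noteq> b" "z \<in> tuples S m" "i < m"
  obtains y where "(z, y) \<in> linked" "y i \<noteq> z i" "\<forall>j. j \<noteq> i \<longrightarrow> y j = z j"
proof -
  \<comment> \<open>Move along coordinate \<open>i\<close> in layer \<open>b\<close> to the position carrying the layer-\<open>a\<close> value at \<open>z\<close>.\<close>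
  have "f0 (z(m := a)) \<in> S"
    using quasigroup_f0 tuples_Suc_upd_last[OF assms(2) a_in_S]
    by (simp add: nary_quasigroup_def)
  then obtain e where e: "e \<in> S" "f0 (z(i := e, m := b)) = f0 (z(m := a))"
    using nary_quasigroup_bij_betw_line[OF quasigroup_f0 assms(2,3) b_in_S]
    by (metis (no_types, lifting) bij_betw_iff_bijections)
  have "e \<noteq> z i"
  proof
    assume "e = z i"
    then have "f0 (z(m := b)) = f0 (z(m := a))" using e(2) by simp
    then show False
      using nary_quasigroup_bij_betw_last[OF quasigroup_f0 assms(2)] assms(1) a_in_S b_in_S
      by (auto simp: bij_betw_def inj_on_def)
  qed
  moreover have "(z, z(i := e)) \<in> linked"
    using assms(2,3) e unfolding linked_def column_pair_def by auto
  ultimately show ?thesis using that by auto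
qed

lemma card_component_class_ge:
  assumes "a \<noteq> b" "X \<in> tuples S m // component"
  shows "2 ^ m \<le> card X"
proof -
  have X: "X \<subseteq> tuples S m" "X \<noteq> {}"
    using assms(2) equiv_component in_quotient_imp_subset in_quotient_imp_non_empty by blast+
  have "2 ^ card {..<m} \<le> card X"
  proof (rule two_power_card_le_card_if_coordinate_neighbours)
    show "finite X" using X(1) finite_tuples[OF finite_S] by (rule finite_subset)
    fix z i assume z: "z \<in> X" and i: "i \<in> {..<m}"
    then obtain y where y: "(z, y) \<in> linked" "y i \<noteq> z i" "\<forall>j. j \<noteq> i \<longrightarrow> y j = z j"
      using linked_neighbour[OF assms(1), of z i] X(1) by blast
    have "y \<in> tuples S m"
      using y(1) unfolding linked_def by (auto intro: tuples_upd)
    then have "(z, y) \<in> component"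
      using y(1) z X(1) by (auto simp: component_def)
    then have "y \<in> X"
      using in_quotient_imp_closed[OF equiv_component assms(2) z] by blast
    then show "\<exists>y\<in>X. y i \<noteq> z i \<and> (\<forall>j. j \<noteq> i \<longrightarrow> y j = z j)" using y by blast
  qed (use X in auto)
  then show ?thesis by simp
qed

lemma card_switchings_le_two_power_components:
  assumes "a \<noteq> b"
  shows "card switchings \<le> 2 ^ card (tuples S m // component)"
proof -
  define agreement where
    "agreement f = {X \<in> tuples S m // component. \<forall>x\<in>X. f (x(m := a)) = f0 (x(m := a))}" for f
  have "inj_on agreement switchings"
  proof (rule inj_onI)
    fix f f' assume f: "f \<in> switchings" and f': "f' \<in> switchings" and eq: "agreement f = agreement f'"
    \<comment> \<open>Agreement with \<open>f0\<close> in layer \<open>a\<close> is constant on components, so \<open>agreement\<close> determines it.\<close>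
    have agrees_iff: "h (x(m := a)) = f0 (x(m := a)) \<longleftrightarrow> component `` {x} \<in> agreement h"
      if "h \<in> switchings" "x \<in> tuples S m" for h x
      using that switching_agreement_along_component[OF assms that(1)]
        equiv_class_self[OF equiv_component that(2)] quotientI[OF that(2)]
      by (auto simp: agreement_def)
    show "f = f'"
    proof (rule switching_eqI[OF f f'], intro ballI)
      fix x assume x: "x \<in> tuples S m"
      have "f (x(m := a)) = f0 (x(m := a)) \<longleftrightarrow> f' (x(m := a)) = f0 (x(m := a))"
        using agrees_iff[OF f x] agrees_iff[OF f' x] eq by simp
      then show "f (x(m := a)) = f' (x(m := a))"
        using switching_value_in_column_pair[OF f x] switching_value_in_column_pair[OF f' x]
        by (auto simp: column_pair_def)
    qed
  qed
  moreover have "agreement ` switchings \<subseteq> Pow (tuples S m // component)"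
    by (auto simp: agreement_def)
  moreover have "finite (tuples S m // component)"
    using finite_quotient[OF finite_tuples[OF finite_S]] equiv_type[OF equiv_component] by blast
  ultimately have "card switchings \<le> card (Pow (tuples S m // component))"
    by (intro card_inj_on_le) auto
  then show ?thesis
    using \<open>finite (tuples S m // component)\<close> by (simp add: card_Pow)
qed

theorem card_switchings_le:
  "real (card switchings) \<le> 2 powr ((real (card S) / 2) ^ m)"
proof (cases "a = b")
  case True
  have agree: "f (x(m := a)) = f0 (x(m := a))" if "f \<in> switchings" "x \<in> tuples S m" for f x
    using switching_value_in_column_pair(1)[OF that] True unfolding column_pair_def by simp
  have "f = f'" if "f \<in> switchings" "f' \<in> switchings" for f f'
    using switching_eqI[OF that] agree[OF that(1)] agree[OF that(2)] by simp
  then have "card switchings \<le> 1"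
    by (cases "finite switchings") (auto simp: card_le_Suc0_iff_eq)
  then have "real (card switchings) \<le> 1" by simp
  also have "\<dots> \<le> 2 powr ((real (card S) / 2) ^ m)" by (simp add: ge_one_powr_ge_zero)
  finally show ?thesis .
next
  case False
  let ?components = "tuples S m // component"
  have "card ?components * 2 ^ m \<le> card S ^ m"
    using card_quotient_mult_le_card[OF finite_tuples[OF finite_S] equiv_component]
      card_component_class_ge[OF False] by (simp add: card_tuples)
  then have "real (card ?components) * 2 ^ m \<le> real (card S) ^ m"
    using of_nat_mono by fastforce
  then have "real (card ?components) \<le> (real (card S) / 2) ^ m"
    by (simp add: power_divide pos_le_divide_eq)
  moreover have "real (card switchings) \<le> 2 ^ card ?components"
    using card_switchings_le_two_power_components[OF False]
    by (simp only: of_nat_le_numeral_power_cancel_iff)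
  ultimately show ?thesis
    by (smt (verit) powr_mono powr_realpow)
qed

end

theorem lemma1:
  fixes S :: "'a set" and n k :: nat and a b :: 'a and g :: "(nat \<Rightarrow> 'a) \<Rightarrow> 'a"
  assumes "finite S" and "card S = k" and "k \<ge> 3" and "n \<ge> 1"
    and "a \<in> S" and "b \<in> S"
    and "partial_nary_quasigroup S n {x \<in> tuples S n. x (n - 1) \<in> S - {a, b}} g"
  shows "real (card (extensions S n {x \<in> tuples S n. x (n - 1) \<in> S - {a, b}} g))
           \<le> 2 powr ((real k / 2) ^ (n - 1))"
proof -
  obtain m where n: "n = Suc m" using assms(4) by (cases n) auto
  let ?outer = "{x \<in> tuples S (Suc m). x m \<in> S - {a, b}}"
  have "real (card (extensions S (Suc m) ?outer g)) \<le> 2 powr ((real k / 2) ^ m)"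
  proof (cases "extensions S (Suc m) ?outer g = {}")
    case False
    then obtain f0 where f0: "f0 \<in> extensions S (Suc m) ?outer g" by blast
    then have "nary_quasigroup S (Suc m) f0" by (simp add: extensions_def)
    then interpret last_coordinate_pair S m a b f0
      using assms(1,5,6) by unfold_locales
    show ?thesis
      using card_switchings_le extensions_eq_extensions_of_mem[OF f0] assms(2) by simp
  qed (simp add: ge_one_powr_ge_zero)
  then show ?thesis unfolding n diff_Suc_1 .
qed

end
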